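(* Let $t=t(n)$. If $t=o(\log n)$, then $$\lim_{n\to\infty}\frac{\log M_{K_{t,t}}(n)}{\binom{n}{2}}=1.$$ If $t=c\log n$ for some constant $c>0$, then $$\lim_{n\to\infty}\frac{\log M_{K_{t,t}}(n)}{\binom{n}{2}}\leq1-2^{-\frac{2}{c}}.$$
   Context: Logarithms are base 2. $K_{t,t}$ is the complete bipartite graph with both parts of size $t$. For graphs $G,G'$ on the same vertex set $[n]$, their symmetric difference $G\oplus G'$ is the graph on $[n]$ whose edge set consists of all edges belonging to exactly one of $G,G'$. For a graph $L$, $M_{L}(n)$ denotes the maximum possible size of a family $\mathcal{G}$ of graphs on vertex set $[n]$ such that for any two distinct $G,G'\in\mathcal{G}$, $G\oplus G'$ contains $L$ as a subgraph. *)

theory Defs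
  imports "HOL-Analysis.Analysis" "HOL-Library.Landau_Symbols" "HOL-Library.Liminf_Limsup"
begin

definition graphs_on :: "nat \<Rightarrow> nat set set set" where
  "graphs_on n = {G. G \<subseteq> {e. e \<subseteq> {1..n} \<and> card e = 2}}"

definition sym_diff_graph :: "nat set set \<Rightarrow> nat set set \<Rightarrow> nat set set" where
  "sym_diff_graph G G' = (G - G') \<union> (G' - G)"

definition contains_subgraph :: "nat \<Rightarrow> 'a set \<times> 'a set set \<Rightarrow> nat set set \<Rightarrow> bool" where
  "contains_subgraph n L G \<longleftrightarrow>
     (\<exists>f. inj_on f (fst L) \<and> f ` fst L \<subseteq> {1..n} \<and> (\<forall>e\<in>snd L. f ` e \<in> G))"

definition K_bip :: "nat \<Rightarrow> (nat + nat) set \<times> (nat + nat) set set" where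
  "K_bip t = (Inl ` {..<t} \<union> Inr ` {..<t}, {{Inl i, Inr j} | i j. i < t \<and> j < t})"

definition good_family :: "'a set \<times> 'a set set \<Rightarrow> nat \<Rightarrow> nat set set set \<Rightarrow> bool" where
  "good_family L n F \<longleftrightarrow> F \<subseteq> graphs_on n \<and>
     (\<forall>G\<in>F. \<forall>G'\<in>F. G \<noteq> G' \<longrightarrow> contains_subgraph n L (sym_diff_graph G G'))"

definition M_L :: "'a set \<times> 'a set set \<Rightarrow> nat \<Rightarrow> nat" where
  "M_L L n = Max (card ` {F. good_family L n F})"

end

theory Submission
  imports Defs "HOL-Real_Asymp.Real_Asymp"
begin

(* Write N = n choose 2, so that graphs on [n] are the subsets of the N possible edges and
   log M <= N trivially.

   Lower bound (Gilbert-Varshamov): a largest good family F is maximal, so every graph differs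
   from some member of F by a K_{t,t}-free graph, and 2^N <= |F| (1 + #K_{t,t}-free graphs).
   By the Kovari-Sos-Turan double count, for t <= log n / (2 log (16/delta)) every graph with
   at least delta N edges contains K_{t,t}; the remaining sparse graphs number at most
   (1 + delta)^N delta^(-delta N) = 2^(N h(delta)), where h = sparse_exponent tends to 0.
   If t = o(log n), this holds for every fixed delta once n is large.

   Upper bound: if H is K_{t,t}-free, then G |-> G - H is injective on a good family, so
   M <= 2^(N - |H|).  A first-moment count shows that some graph with floor (q N) edges is
   K_{t,t}-free as soon as (n choose t)^2 q^(t^2) < 1, which for t = c log n holds eventually
   whenever q < 2^(-2/c). *)

section \<open>Graphs on [n] and good families\<close>

definition edges_on :: "nat \<Rightarrow> nat set set" where
  "edges_on n = {e. e \<subseteq> {1..n} \<and> card e = 2}"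

lemma finite_edges_on [simp]: "finite (edges_on n)"
  unfolding edges_on_def by (rule finite_subset[of _ "Pow {1..n}"]) auto

lemma card_edges_on: "card (edges_on n) = n choose 2"
  unfolding edges_on_def using n_subsets[of "{1..n}" 2] by simp

lemma real_choose_two: "real (n choose 2) = real n * (real n - 1) / 2"
proof (cases n)
  case (Suc m)
  have "2 * (n choose 2) = n * m"
    using Suc_times_binomial[of 1 m] Suc by (simp add: numeral_2_eq_2)
  then have "2 * real (n choose 2) = real n * real m"
    by (metis of_nat_mult of_nat_numeral)
  then show ?thesis using Suc by (simp add: field_simps)
qed simp

lemma graphs_on_eq_Pow: "graphs_on n = Pow (edges_on n)"
  unfolding graphs_on_def edges_on_def by auto

lemma finite_graphs_on [simp]: "finite (graphs_on n)"
  by (simp add: graphs_on_eq_Pow)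

lemma card_graphs_on: "card (graphs_on n) = 2 ^ (n choose 2)"
  by (simp add: graphs_on_eq_Pow card_Pow card_edges_on)

lemma contains_subgraph_mono:
  "contains_subgraph n L G \<Longrightarrow> G \<subseteq> G' \<Longrightarrow> contains_subgraph n L G'"
  unfolding contains_subgraph_def by blast

definition bip_edges :: "nat set \<Rightarrow> nat set \<Rightarrow> nat set set" where
  "bip_edges S T = (\<lambda>(s, u). {s, u}) ` (S \<times> T)"

lemma bip_edges_subset_iff: "bip_edges S T \<subseteq> G \<longleftrightarrow> (\<forall>s\<in>S. \<forall>u\<in>T. {s, u} \<in> G)"
  unfolding bip_edges_def by auto

lemma bip_edges_subset_edges_on:
  "S \<subseteq> {1..n} \<Longrightarrow> T \<subseteq> {1..n} \<Longrightarrow> S \<inter> T = {} \<Longrightarrow> bip_edges S T \<subseteq> edges_on n"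
  unfolding bip_edges_def edges_on_def by auto (metis card_2_iff disjoint_iff)

lemma card_bip_edges:
  assumes "S \<inter> T = {}"
  shows "card (bip_edges S T) = card S * card T"
proof -
  have "inj_on (\<lambda>(s, u). {s, u}) (S \<times> T)"
    using assms by (auto intro!: inj_onI simp: doubleton_eq_iff)
  then show ?thesis
    unfolding bip_edges_def by (simp add: card_image card_cartesian_product)
qed

lemma contains_K_bip_if_bip_edges:
  assumes "S \<subseteq> {1..n}" "T \<subseteq> {1..n}" "card S = t" "card T = t" "S \<inter> T = {}"
    and "bip_edges S T \<subseteq> G"
  shows "contains_subgraph n (K_bip t) G"
proof -
  have "finite S" "finite T" using assms(1,2) finite_subset by auto
  then obtain g h where g: "bij_betw g {..<t} S" and h: "bij_betw h {..<t} T"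
    using ex_bij_betw_nat_finite assms(3,4) by (metis atLeast0LessThan)
  define f where "f = case_sum g h"
  have "f ` Inl ` {..<t} = S" "f ` Inr ` {..<t} = T"
    using g h by (auto simp: f_def image_image bij_betw_def)
  moreover have "inj_on f (Inl ` {..<t})" "inj_on f (Inr ` {..<t})"
    using g h by (auto intro!: inj_on_imageI simp: f_def comp_def bij_betw_def)
  ultimately have "inj_on f (Inl ` {..<t} \<union> Inr ` {..<t})"
    using assms(5) by (auto simp: inj_on_Un)
  moreover have "f ` (Inl ` {..<t} \<union> Inr ` {..<t}) \<subseteq> {1..n}"
    using \<open>f ` Inl ` {..<t} = S\<close> \<open>f ` Inr ` {..<t} = T\<close> assms(1,2) by auto
  moreover have "f ` {Inl i, Inr j} \<in> G" if "i < t" "j < t" for i j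
    using that g h assms(6) by (auto simp: f_def bij_betw_def bip_edges_subset_iff)
  ultimately show ?thesis
    unfolding contains_subgraph_def K_bip_def by auto
qed

lemma contains_K_bip_iff:
  "contains_subgraph n (K_bip t) G \<longleftrightarrow>
   (\<exists>S T. S \<subseteq> {1..n} \<and> T \<subseteq> {1..n} \<and> card S = t \<and> card T = t \<and> S \<inter> T = {} \<and>
      bip_edges S T \<subseteq> G)"
proof
  assume "contains_subgraph n (K_bip t) G"
  then obtain f where inj: "inj_on f (Inl ` {..<t} \<union> Inr ` {..<t})"
    and range: "f ` (Inl ` {..<t} \<union> Inr ` {..<t}) \<subseteq> {1..n}"
    and edges: "\<forall>e\<in>{{Inl i, Inr j} | i j. i < t \<and> j < t}. f ` e \<in> G"
    unfolding contains_subgraph_def K_bip_def by auto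
  define S where "S = f ` Inl ` {..<t}"
  define T where "T = f ` Inr ` {..<t}"
  have "card S = t" "card T = t"
    unfolding S_def T_def using inj
    by (auto simp: card_image inj_on_Un intro: inj_on_subset)
  moreover have "S \<inter> T = {}"
    using inj unfolding S_def T_def inj_on_def by blast
  moreover have "{f (Inl i), f (Inr j)} \<in> G" if "i < t" "j < t" for i j
  proof -
    have "f ` {Inl i, Inr j} \<in> G" using edges that by blast
    then show ?thesis by simp
  qed
  then have "bip_edges S T \<subseteq> G"
    unfolding S_def T_def bip_edges_subset_iff by blast
  moreover have "S \<subseteq> {1..n}" "T \<subseteq> {1..n}"
    using range unfolding S_def T_def by auto
  ultimately show "\<exists>S T. S \<subseteq> {1..n} \<and> T \<subseteq> {1..n} \<and> card S = t \<and> card T = t \<and>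
      S \<inter> T = {} \<and> bip_edges S T \<subseteq> G" by blast
qed (use contains_K_bip_if_bip_edges in blast)

lemma finite_good_families: "finite {F. good_family L n F}"
  by (rule finite_subset[of _ "Pow (graphs_on n)"]) (auto simp: good_family_def)

lemma card_le_M_L: "good_family L n F \<Longrightarrow> card F \<le> M_L L n"
  unfolding M_L_def using finite_good_families[of L n] by (intro Max_ge) auto

lemma ex_good_family_card_M_L: "\<exists>F. good_family L n F \<and> card F = M_L L n"
proof -
  have "{} \<in> {F. good_family L n F}" by (simp add: good_family_def)
  then have "M_L L n \<in> card ` {F. good_family L n F}"
    unfolding M_L_def using finite_good_families[of L n] by (intro Max_in) auto
  then show ?thesis by auto
qed

lemma M_L_pos: "0 < M_L L n"
proof -
  have "good_family L n {{}}" by (simp add: good_family_def graphs_on_def)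
  from card_le_M_L[OF this] show ?thesis by simp
qed

lemma M_L_le_if_free:
  assumes "H \<subseteq> edges_on n" and "\<not> contains_subgraph n L H"
  shows "M_L L n \<le> 2 ^ card (edges_on n - H)"
proof -
  obtain F where F: "good_family L n F" "card F = M_L L n"
    using ex_good_family_card_M_L by blast
  have "inj_on (\<lambda>G. G - H) F"
  proof (rule inj_onI, rule ccontr)
    fix G G' assume "G \<in> F" "G' \<in> F" "G - H = G' - H" "G \<noteq> G'"
    then have "contains_subgraph n L (sym_diff_graph G G')"
      using F(1) unfolding good_family_def by blast
    moreover have "sym_diff_graph G G' \<subseteq> H"
      using \<open>G - H = G' - H\<close> unfolding sym_diff_graph_def by blast
    ultimately show False using assms(2) contains_subgraph_mono by blast
  qed
  moreover have "(\<lambda>G. G - H) ` F \<subseteq> Pow (edges_on n - H)"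
    using F(1) unfolding good_family_def graphs_on_eq_Pow by blast
  ultimately have "card F \<le> card (Pow (edges_on n - H))"
    by (intro card_inj_on_le) auto
  then show ?thesis using F(2) by (simp add: card_Pow)
qed

lemma M_L_le: "M_L L n \<le> 2 ^ (n choose 2)"
proof -
  obtain F where F: "good_family L n F" "card F = M_L L n"
    using ex_good_family_card_M_L by blast
  then have "card F \<le> card (graphs_on n)"
    unfolding good_family_def by (intro card_mono) auto
  then show ?thesis using F(2) card_graphs_on by simp
qed

lemma log_le_if_le_power_2:
  fixes x k :: nat
  assumes "0 < x" "x \<le> 2 ^ k"
  shows "log 2 (real x) \<le> real k"
proof -
  have "real x \<le> real (2 ^ k)" using assms(2) by (simp only: of_nat_le_iff)
  then have "log 2 (real x) \<le> log 2 (2 ^ k)" using assms(1) by (subst log_le_cancel_iff) auto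
  then show ?thesis by simp
qed

lemma log_M_L_le: "log 2 (real (M_L L n)) \<le> real (n choose 2)"
  using log_le_if_le_power_2[OF M_L_pos M_L_le] .

lemma sym_diff_graph_commute: "sym_diff_graph G G' = sym_diff_graph G' G"
  unfolding sym_diff_graph_def by auto

lemma sym_diff_graph_cancel: "sym_diff_graph (sym_diff_graph G G') G' = G"
  unfolding sym_diff_graph_def by auto

lemma good_family_insert:
  assumes "good_family L n F" "G \<in> graphs_on n"
    and "\<forall>G'\<in>F. contains_subgraph n L (sym_diff_graph G G')"
  shows "good_family L n (insert G F)"
  unfolding good_family_def
proof (intro conjI ballI impI)
  show "insert G F \<subseteq> graphs_on n" using assms(1,2) unfolding good_family_def by blast
next
  fix X Y assume "X \<in> insert G F" "Y \<in> insert G F" "X \<noteq> Y"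
  then show "contains_subgraph n L (sym_diff_graph X Y)"
    using assms(1,3) unfolding good_family_def
    by (cases "X = G"; cases "Y = G") (auto simp: sym_diff_graph_commute)
qed

lemma card_sym_diff_graph_preimage_le:
  assumes "finite B"
  shows "card {G \<in> X. sym_diff_graph G G' \<in> B} \<le> card B"
proof (rule card_inj_on_le[OF _ _ assms])
  show "inj_on (\<lambda>G. sym_diff_graph G G') {G \<in> X. sym_diff_graph G G' \<in> B}"
    by (rule inj_onI) (metis sym_diff_graph_cancel)
qed auto

lemma ex_free_sym_diff_if_maximum:
  assumes F: "good_family L n F" "card F = M_L L n" and G: "G \<in> graphs_on n" "G \<notin> F"
  shows "\<exists>G'\<in>F. \<not> contains_subgraph n L (sym_diff_graph G G')"
proof (rule ccontr)
  assume "\<not> ?thesis"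
  then have "good_family L n (insert G F)"
    using good_family_insert[OF F(1) G(1)] by blast
  then have "card (insert G F) \<le> card F"
    using card_le_M_L F(2) by simp
  moreover have "finite F"
    using F(1) unfolding good_family_def by (rule finite_subset[OF conjunct1]) simp
  ultimately show False using G(2) by simp
qed

lemma M_L_Gilbert_Varshamov:
  "2 ^ (n choose 2) \<le> M_L L n * (1 + card {D \<in> graphs_on n. \<not> contains_subgraph n L D})"
proof -
  define B where "B = {D \<in> graphs_on n. \<not> contains_subgraph n L D}"
  define A where "A G' = {G \<in> graphs_on n. sym_diff_graph G G' \<in> B}" for G'
  obtain F where F: "good_family L n F" "card F = M_L L n"
    using ex_good_family_card_M_L by blast
  have "F \<subseteq> graphs_on n" using F(1) unfolding good_family_def by blast
  then have "finite F" by (rule finite_subset) simp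
  have cover: "graphs_on n \<subseteq> F \<union> (\<Union>G'\<in>F. A G')"
  proof
    fix G assume G: "G \<in> graphs_on n"
    show "G \<in> F \<union> (\<Union>G'\<in>F. A G')"
    proof (cases "G \<in> F")
      case False
      then obtain G' where "G' \<in> F" "\<not> contains_subgraph n L (sym_diff_graph G G')"
        using ex_free_sym_diff_if_maximum[OF F G] by blast
      moreover have "sym_diff_graph G G' \<in> graphs_on n"
        using \<open>F \<subseteq> graphs_on n\<close> G \<open>G' \<in> F\<close>
        unfolding graphs_on_eq_Pow sym_diff_graph_def by blast
      ultimately show ?thesis using G unfolding A_def B_def by blast
    qed simp
  qed
  have "2 ^ (n choose 2) \<le> card (F \<union> (\<Union>G'\<in>F. A G'))"
    unfolding card_graphs_on[symmetric] using cover \<open>finite F\<close>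
    by (intro card_mono) (simp_all add: A_def)
  also have "\<dots> \<le> card F + card (\<Union>G'\<in>F. A G')"
    by (rule card_Un_le)
  also have "\<dots> \<le> card F + (\<Sum>G'\<in>F. card (A G'))"
    using card_UN_le[OF \<open>finite F\<close>] by (rule add_left_mono)
  also have "\<dots> \<le> card F + (\<Sum>G'\<in>F. card B)"
    unfolding A_def by (intro add_left_mono sum_mono card_sym_diff_graph_preimage_le) (simp add: B_def)
  also have "\<dots> = M_L L n * (1 + card B)" using F(2) by (simp add: algebra_simps)
  finally show ?thesis unfolding B_def .
qed

section \<open>Counting sparse graphs\<close>

lemma sum_Pow_power_card:
  fixes x :: "'a :: comm_semiring_1"
  assumes "finite E"
  shows "(\<Sum>D\<in>Pow E. x ^ card D) = (1 + x) ^ card E"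
  using prod_add[OF assms, of "\<lambda>_. x" "\<lambda>_. 1"] by (simp add: add.commute)

lemma card_small_subsets_mult_powr_le:
  fixes x K :: real
  assumes "finite E" and "0 < x" "x \<le> 1"
  shows "real (card {D \<in> Pow E. real (card D) \<le> K}) * x powr K \<le> (1 + x) ^ card E"
proof -
  have "real (card {D \<in> Pow E. real (card D) \<le> K}) * x powr K
      = (\<Sum>D\<in>{D \<in> Pow E. real (card D) \<le> K}. x powr K)"
    by simp
  also have "\<dots> \<le> (\<Sum>D\<in>{D \<in> Pow E. real (card D) \<le> K}. x ^ card D)"
  proof (rule sum_mono)
    fix D assume "D \<in> {D \<in> Pow E. real (card D) \<le> K}"
    then have "x powr K \<le> x powr real (card D)"
      using assms(2,3) by (intro powr_mono') auto
    then show "x powr K \<le> x ^ card D"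
      using assms(2) by (simp add: powr_realpow)
  qed
  also have "\<dots> \<le> (\<Sum>D\<in>Pow E. x ^ card D)"
    using assms by (intro sum_mono2) auto
  also have "\<dots> = (1 + x) ^ card E"
    using assms(1) by (rule sum_Pow_power_card)
  finally show ?thesis .
qed

lemma powr_eq_2_powr_log:
  assumes "0 < x"
  shows "x powr y = 2 powr (y * log 2 x)"
proof -
  have "x powr y = (2 powr log 2 x) powr y" using assms by simp
  also have "\<dots> = 2 powr (y * log 2 x)" by (simp add: powr_powr mult.commute)
  finally show ?thesis .
qed

lemma power_eq_2_powr_log:
  assumes "0 < x"
  shows "x ^ k = 2 powr (real k * log 2 x)"
  using powr_eq_2_powr_log[OF assms, of "real k"] assms by (simp add: powr_realpow)

definition sparse_exponent :: "real \<Rightarrow> real" where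
  "sparse_exponent \<delta> = log 2 (1 + \<delta>) + \<delta> * log 2 (1 / \<delta>)"

lemma sparse_exponent_nonneg: "0 < \<delta> \<Longrightarrow> \<delta> \<le> 1 \<Longrightarrow> 0 \<le> sparse_exponent \<delta>"
  unfolding sparse_exponent_def by simp

lemma card_free_graphs_le:
  fixes \<delta> :: real
  assumes \<delta>: "0 < \<delta>" "\<delta> \<le> 1"
    and dense: "\<And>D. D \<subseteq> edges_on n \<Longrightarrow> \<delta> * real (n choose 2) \<le> real (card D) \<Longrightarrow>
                  contains_subgraph n L D"
  shows "real (card {D \<in> graphs_on n. \<not> contains_subgraph n L D})
           \<le> 2 powr (real (n choose 2) * sparse_exponent \<delta>)"
proof -
  define N where "N = n choose 2"
  have "{D \<in> graphs_on n. \<not> contains_subgraph n L D}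
          \<subseteq> {D \<in> Pow (edges_on n). real (card D) \<le> \<delta> * real N}"
    using dense unfolding graphs_on_eq_Pow N_def by force
  then have "card {D \<in> graphs_on n. \<not> contains_subgraph n L D}
           \<le> card {D \<in> Pow (edges_on n). real (card D) \<le> \<delta> * real N}"
    by (rule card_mono[rotated]) simp
  then have "real (card {D \<in> graphs_on n. \<not> contains_subgraph n L D}) * \<delta> powr (\<delta> * real N)
           \<le> real (card {D \<in> Pow (edges_on n). real (card D) \<le> \<delta> * real N}) * \<delta> powr (\<delta> * real N)"
    by (intro mult_right_mono) auto
  also have "\<dots> \<le> (1 + \<delta>) ^ N"
    using card_small_subsets_mult_powr_le[OF finite_edges_on \<delta>] by (simp add: card_edges_on N_def)
  also have "\<dots> = (1 + \<delta>) powr real N"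
    using \<delta> by (simp add: powr_realpow)
  also have "\<dots> = 2 powr (real N * log 2 (1 + \<delta>))"
    using \<delta> by (intro powr_eq_2_powr_log) simp
  finally have "real (card {D \<in> graphs_on n. \<not> contains_subgraph n L D})
      \<le> 2 powr (real N * log 2 (1 + \<delta>)) / 2 powr (\<delta> * real N * log 2 \<delta>)"
    unfolding powr_eq_2_powr_log[OF \<delta>(1)] by (simp add: pos_le_divide_eq)
  also have "\<dots> = 2 powr (real N * sparse_exponent \<delta>)"
    using \<delta> by (simp add: sparse_exponent_def log_divide algebra_simps flip: powr_diff)
  finally show ?thesis unfolding N_def .
qed

lemma M_L_ratio_ge_if_dense_contains:
  fixes \<delta> :: real
  assumes \<delta>: "0 < \<delta>" "\<delta> \<le> 1" and "2 \<le> n"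
    and dense: "\<And>D. D \<subseteq> edges_on n \<Longrightarrow> \<delta> * real (n choose 2) \<le> real (card D) \<Longrightarrow>
                  contains_subgraph n L D"
  shows "1 - 1 / real (n choose 2) - sparse_exponent \<delta>
           \<le> log 2 (real (M_L L n)) / real (n choose 2)"
proof -
  define N where "N = n choose 2"
  define X where "X = 2 powr (real N * sparse_exponent \<delta>)"
  define B where "B = {D \<in> graphs_on n. \<not> contains_subgraph n L D}"
  have "0 < real N" using \<open>2 \<le> n\<close> by (simp add: N_def)
  have "1 \<le> X"
    unfolding X_def using sparse_exponent_nonneg[OF \<delta>] by (simp add: ge_one_powr_ge_zero)
  have "real (card B) \<le> X"
    unfolding B_def X_def N_def using card_free_graphs_le[OF \<delta> dense] by blast
  have "real (2 ^ N) \<le> real (M_L L n * (1 + card B))"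
    using M_L_Gilbert_Varshamov[of n L] unfolding B_def N_def by (simp only: of_nat_le_iff)
  then have "(2::real) ^ N \<le> real (M_L L n) * (1 + real (card B))"
    by (simp add: algebra_simps)
  also have "\<dots> \<le> real (M_L L n) * (2 * X)"
    using \<open>1 \<le> X\<close> \<open>real (card B) \<le> X\<close> by (intro mult_left_mono) auto
  finally have "real N \<le> log 2 (real (M_L L n) * (2 * X))"
    using M_L_pos[of L n] \<open>1 \<le> X\<close> by (subst le_log_iff) (auto simp: powr_realpow)
  also have "\<dots> = log 2 (real (M_L L n)) + 1 + real N * sparse_exponent \<delta>"
    using M_L_pos[of L n] \<open>1 \<le> X\<close> by (simp add: log_mult X_def)
  finally have "(real N - 1 - real N * sparse_exponent \<delta>) / real N
                  \<le> log 2 (real (M_L L n)) / real N"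
    using \<open>0 < real N\<close> by (intro divide_right_mono) auto
  moreover have "(real N - 1 - real N * sparse_exponent \<delta>) / real N
                   = 1 - 1 / real N - sparse_exponent \<delta>"
    using \<open>0 < real N\<close> by (simp add: field_simps)
  ultimately show ?thesis unfolding N_def by simp
qed

section \<open>The Kovari--Sos--Turan bound\<close>

definition nbhd :: "nat \<Rightarrow> nat set set \<Rightarrow> nat \<Rightarrow> nat set" where
  "nbhd n D v = {u \<in> {1..n}. {u, v} \<in> D}"

lemma nbhd_subset: "nbhd n D v \<subseteq> {1..n}"
  unfolding nbhd_def by blast

lemma finite_nbhd [simp]: "finite (nbhd n D v)"
  by (rule finite_subset[OF nbhd_subset]) simp

lemma card_nbhd_le: "card (nbhd n D v) \<le> n"
  using card_mono[OF _ nbhd_subset, of n D v] by simp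

lemma card_2_obtain_other:
  assumes "card e = 2" "v \<in> e"
  obtains u where "u \<noteq> v" "e = {u, v}"
  using assms by (metis card_2_iff insertE insert_commute singleton_iff)

lemma card_le_sum_card_nbhd:
  assumes "D \<subseteq> edges_on n"
  shows "card D \<le> (\<Sum>v\<in>{1..n}. card (nbhd n D v))"
proof -
  have star_le: "card {e \<in> D. v \<in> e} \<le> card (nbhd n D v)" for v
  proof -
    have "{e \<in> D. v \<in> e} \<subseteq> (\<lambda>u. {u, v}) ` nbhd n D v"
    proof
      fix e assume e: "e \<in> {e \<in> D. v \<in> e}"
      then have "card e = 2" "e \<subseteq> {1..n}" using assms unfolding edges_on_def by auto
      then obtain u where "e = {u, v}" using e by (auto elim: card_2_obtain_other)
      then show "e \<in> (\<lambda>u. {u, v}) ` nbhd n D v"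
        using e \<open>e \<subseteq> {1..n}\<close> unfolding nbhd_def by auto
    qed
    then have "card {e \<in> D. v \<in> e} \<le> card ((\<lambda>u. {u, v}) ` nbhd n D v)"
      by (intro card_mono) auto
    also have "\<dots> \<le> card (nbhd n D v)"
      by (rule card_image_le) simp
    finally show ?thesis .
  qed
  have "D \<subseteq> (\<Union>v\<in>{1..n}. {e \<in> D. v \<in> e})"
  proof
    fix e assume "e \<in> D"
    then have "e \<subseteq> {1..n}" "e \<noteq> {}" using assms unfolding edges_on_def by auto
    then show "e \<in> (\<Union>v\<in>{1..n}. {e \<in> D. v \<in> e})" using \<open>e \<in> D\<close> by blast
  qed
  moreover have "finite D"
    using assms by (rule finite_subset) simp
  ultimately have "card D \<le> card (\<Union>v\<in>{1..n}. {e \<in> D. v \<in> e})"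
    by (intro card_mono) auto
  also have "\<dots> \<le> (\<Sum>v\<in>{1..n}. card {e \<in> D. v \<in> e})"
    by (rule card_UN_le) simp
  also have "\<dots> \<le> (\<Sum>v\<in>{1..n}. card (nbhd n D v))"
    using star_le by (rule sum_mono)
  finally show ?thesis .
qed

lemma sum_card_nbhd_choose:
  "(\<Sum>v\<in>{1..n}. card (nbhd n D v) choose t)
     = (\<Sum>T\<in>{T. T \<subseteq> {1..n} \<and> card T = t}. card {v \<in> {1..n}. T \<subseteq> nbhd n D v})"
proof -
  define Ts where "Ts = {T. T \<subseteq> {1..n} \<and> card T = t}"
  have "finite Ts" unfolding Ts_def by (rule finite_subset[of _ "Pow {1..n}"]) auto
  have "card (nbhd n D v) choose t = card {T \<in> Ts. T \<subseteq> nbhd n D v}" for v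
  proof -
    have "{T \<in> Ts. T \<subseteq> nbhd n D v} = {T. T \<subseteq> nbhd n D v \<and> card T = t}"
      using nbhd_subset[of n D v] unfolding Ts_def by blast
    then show ?thesis by (simp add: n_subsets)
  qed
  then have "(\<Sum>v\<in>{1..n}. card (nbhd n D v) choose t)
      = (\<Sum>v\<in>{1..n}. \<Sum>T\<in>{T \<in> Ts. T \<subseteq> nbhd n D v}. 1)"
    by simp
  also have "\<dots> = (\<Sum>T\<in>Ts. \<Sum>v\<in>{v \<in> {1..n}. T \<subseteq> nbhd n D v}. 1)"
    using \<open>finite Ts\<close> by (intro sum.swap_restrict) simp_all
  also have "\<dots> = (\<Sum>T\<in>Ts. card {v \<in> {1..n}. T \<subseteq> nbhd n D v})"
    by simp
  finally show ?thesis unfolding Ts_def .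
qed

lemma contains_K_bip_if_sum_choose_gt:
  assumes D: "D \<subseteq> edges_on n"
    and many: "(t - 1) * (n choose t) < (\<Sum>v\<in>{1..n}. card (nbhd n D v) choose t)"
  shows "contains_subgraph n (K_bip t) D"
proof -
  define Ts where "Ts = {T. T \<subseteq> {1..n} \<and> card T = t}"
  \<comment> \<open>Some \<open>t\<close>-set has \<open>t\<close> common neighbours; they lie outside it since graphs have no loops.\<close>
  have "\<exists>T\<in>Ts. t \<le> card {v \<in> {1..n}. T \<subseteq> nbhd n D v}"
  proof (rule ccontr)
    assume "\<not> ?thesis"
    then have "(\<Sum>T\<in>Ts. card {v \<in> {1..n}. T \<subseteq> nbhd n D v}) \<le> (\<Sum>T\<in>Ts. t - 1)"
      by (intro sum_mono) auto
    also have "\<dots> = (t - 1) * (n choose t)"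
      unfolding Ts_def using n_subsets[of "{1..n}" t] by simp
    finally show False
      using many sum_card_nbhd_choose[of n D t] unfolding Ts_def by linarith
  qed
  then obtain T S where T: "T \<in> Ts" and S: "S \<subseteq> {v \<in> {1..n}. T \<subseteq> nbhd n D v}" "card S = t"
    by (meson obtain_subset_with_card_n)
  have "S \<inter> T = {}"
  proof (rule ccontr)
    assume "S \<inter> T \<noteq> {}"
    then obtain v where "v \<in> S" "v \<in> T" by blast
    then have "{v, v} \<in> D" using S(1) unfolding nbhd_def by blast
    then show False using D unfolding edges_on_def by auto
  qed
  moreover have "bip_edges S T \<subseteq> D"
    using S(1) unfolding bip_edges_subset_iff nbhd_def by (auto simp: insert_commute)
  ultimately show ?thesis
    using T S by (intro contains_K_bip_if_bip_edges[of S n T]) (auto simp: Ts_def)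
qed

lemma pow_diff_le_fact_mult_choose:
  "t \<le> d \<Longrightarrow> (real d - real t) ^ t \<le> fact t * real (d choose t)"
proof (induction t arbitrary: d)
  case 0
  then show ?case by simp
next
  case (Suc t)
  then obtain d' where d: "d = Suc d'" "t \<le> d'" by (cases d) auto
  have "(real d - real (Suc t)) ^ Suc t = (real d' - real t) * (real d' - real t) ^ t"
    using d(1) by simp
  also have "\<dots> \<le> real (Suc d') * (fact t * real (d' choose t))"
    using Suc.IH[OF d(2)] d(2) by (intro mult_mono) auto
  also have "\<dots> = fact t * real (Suc t * (Suc d' choose Suc t))"
    by (simp only: Suc_times_binomial) (simp add: algebra_simps)
  also have "\<dots> = fact (Suc t) * real (d choose Suc t)"
    using d(1) by (simp add: algebra_simps)
  finally show ?case .
qed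

lemma card_high_degree_ge:
  fixes \<delta> :: real
  assumes D: "D \<subseteq> edges_on n" and "0 \<le> \<delta>"
    and dense: "\<delta> * real (n choose 2) \<le> real (card D)"
  shows "\<delta> * (real n - 1) / 4
           \<le> real (card {v \<in> {1..n}. \<delta> * (real n - 1) / 4 \<le> real (card (nbhd n D v))})"
    (is "?a \<le> real (card ?H)")
proof (cases "n = 0")
  case False
  have "?H \<subseteq> {1..n}" by blast
  have "\<delta> * (real n * (real n - 1) / 2) \<le> real (card D)"
    using dense by (simp add: real_choose_two)
  also have "\<dots> \<le> (\<Sum>v\<in>{1..n}. real (card (nbhd n D v)))"
    using card_le_sum_card_nbhd[OF D] by (simp flip: of_nat_sum)
  also have "\<dots> = (\<Sum>v\<in>{1..n} - ?H. real (card (nbhd n D v))) + (\<Sum>v\<in>?H. real (card (nbhd n D v)))"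
    by (rule sum.subset_diff) auto
  also have "\<dots> \<le> (\<Sum>v\<in>{1..n} - ?H. ?a) + (\<Sum>v\<in>?H. real n)"
    using card_nbhd_le by (intro add_mono sum_mono) force+
  also have "\<dots> = real (card ({1..n} - ?H)) * ?a + real (card ?H) * real n"
    by simp
  also have "\<dots> \<le> real n * ?a + real (card ?H) * real n"
  proof -
    have "card ({1..n} - ?H) \<le> n" using card_mono[OF _ Diff_subset, of "{1..n}"] by simp
    moreover have "0 \<le> ?a" using False \<open>0 \<le> \<delta>\<close> by simp
    ultimately show ?thesis by (intro add_right_mono mult_right_mono) auto
  qed
  finally have "\<delta> * (real n * (real n - 1) / 2) \<le> real n * ?a + real (card ?H) * real n" .
  moreover have "\<delta> * (real n * (real n - 1) / 2) = real n * (2 * ?a)"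
    by (simp add: field_simps)
  moreover have "real n * (?a + real (card ?H)) = real n * ?a + real (card ?H) * real n"
    by (simp add: algebra_simps)
  ultimately have "real n * (2 * ?a) \<le> real n * (?a + real (card ?H))"
    by metis
  then show ?thesis using False by simp
qed (use \<open>0 \<le> \<delta>\<close> in simp)

lemma card_high_degree_mult_power_le:
  fixes a :: real
  assumes "real t \<le> a"
  shows "real (card {v \<in> {1..n}. a \<le> real (card (nbhd n D v))}) * (a - real t) ^ t
           \<le> fact t * real (\<Sum>v\<in>{1..n}. card (nbhd n D v) choose t)"
proof -
  define H where "H = {v \<in> {1..n}. a \<le> real (card (nbhd n D v))}"
  have "real (card H) * (a - real t) ^ t = (\<Sum>v\<in>H. (a - real t) ^ t)"
    by simp
  also have "\<dots> \<le> (\<Sum>v\<in>H. fact t * real (card (nbhd n D v) choose t))"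
  proof (rule sum_mono)
    fix v assume "v \<in> H"
    then have "a \<le> real (card (nbhd n D v))"
      unfolding H_def by blast
    then have "(a - real t) ^ t \<le> (real (card (nbhd n D v)) - real t) ^ t"
      using assms by (intro power_mono) auto
    also have "\<dots> \<le> fact t * real (card (nbhd n D v) choose t)"
      using \<open>a \<le> real (card (nbhd n D v))\<close> assms
      by (intro pow_diff_le_fact_mult_choose) linarith
    finally show "(a - real t) ^ t \<le> fact t * real (card (nbhd n D v) choose t)" .
  qed
  also have "\<dots> \<le> (\<Sum>v\<in>{1..n}. fact t * real (card (nbhd n D v) choose t))"
    by (intro sum_mono2) (auto simp: H_def)
  also have "\<dots> = fact t * real (\<Sum>v\<in>{1..n}. card (nbhd n D v) choose t)"
    by (simp add: sum_distrib_left)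
  finally show ?thesis unfolding H_def .
qed

lemma contains_K_bip_if_dense:
  fixes \<delta> :: real
  assumes "0 \<le> \<delta>" "2 \<le> n" "1 \<le> t" and D: "D \<subseteq> edges_on n"
    and dense: "\<delta> * real (n choose 2) \<le> real (card D)"
    and t_small: "real t \<le> \<delta> * real n / 16"
    and t_tiny: "real t \<le> \<delta> * real n / 8 * (\<delta> / 16) ^ t"
  shows "contains_subgraph n (K_bip t) D"
proof -
  define a where "a = \<delta> * (real n - 1) / 4"
  define H where "H = {v \<in> {1..n}. a \<le> real (card (nbhd n D v))}"
  have "a \<le> real (card H)"
    unfolding a_def H_def using card_high_degree_ge[OF D \<open>0 \<le> \<delta>\<close> dense] .
  have "\<delta> * 2 \<le> \<delta> * real n"
    using assms(1,2) by (intro mult_left_mono) auto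
  then have "\<delta> * real n / 8 \<le> a" "\<delta> * real n / 16 \<le> a - real t"
    using t_small by (auto simp: a_def field_simps)
  moreover have "0 \<le> \<delta> * real n / 16"
    using assms(1) by simp
  ultimately have "real t \<le> a"
    by linarith
  have "real ((n choose t) * fact t) \<le> real (n ^ t)"
    using binomial_fact_pow[of n t] by (simp only: of_nat_le_iff)
  then have "fact t * real (n choose t) \<le> real n ^ t"
    by (simp add: mult.commute)
  have "fact t * real ((t - 1) * (n choose t)) = real (t - 1) * (fact t * real (n choose t))"
    by simp
  also have "\<dots> \<le> real (t - 1) * real n ^ t"
    using \<open>fact t * real (n choose t) \<le> real n ^ t\<close> by (intro mult_left_mono) auto
  also have "\<dots> < real t * real n ^ t"
    using assms(2,3) by (intro mult_strict_right_mono) auto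
  also have "\<dots> \<le> \<delta> * real n / 8 * (\<delta> * real n / 16) ^ t"
    using mult_right_mono[OF t_tiny, of "real n ^ t"] by (simp add: field_simps)
  also have "\<dots> \<le> real (card H) * (a - real t) ^ t"
    using \<open>\<delta> * real n / 8 \<le> a\<close> \<open>\<delta> * real n / 16 \<le> a - real t\<close> \<open>a \<le> real (card H)\<close>
      \<open>0 \<le> \<delta> * real n / 16\<close>
    by (intro mult_mono power_mono) auto
  also have "\<dots> \<le> fact t * real (\<Sum>v\<in>{1..n}. card (nbhd n D v) choose t)"
    unfolding H_def using \<open>real t \<le> a\<close> by (rule card_high_degree_mult_power_le)
  finally have "(t - 1) * (n choose t) < (\<Sum>v\<in>{1..n}. card (nbhd n D v) choose t)"
    by (simp only: mult_less_cancel_left_pos fact_gt_zero of_nat_less_iff)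
  then show ?thesis
    by (rule contains_K_bip_if_sum_choose_gt[OF D])
qed

lemma inverse_sqrt_le_power:
  fixes b x :: real
  assumes "0 < b" "0 < x" and "2 * real t * log 2 (1 / b) \<le> log 2 x"
  shows "1 / sqrt x \<le> b ^ t"
proof -
  have "1 / sqrt x = x powr (- 1 / 2)"
    using assms(2) by (simp add: powr_minus_divide powr_half_sqrt)
  also have "\<dots> = 2 powr (- 1 / 2 * log 2 x)"
    by (rule powr_eq_2_powr_log[OF assms(2)])
  also have "\<dots> \<le> 2 powr (real t * log 2 b)"
    using assms(3) log_divide[of 2 1 b] assms(1) by (intro powr_mono) auto
  also have "\<dots> = b powr real t"
    by (rule powr_eq_2_powr_log[OF assms(1), symmetric])
  also have "\<dots> = b ^ t"
    using assms(1) by (simp add: powr_realpow)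
  finally show ?thesis .
qed

lemma contains_K_bip_0: "contains_subgraph n (K_bip 0) G"
  by (rule contains_K_bip_if_bip_edges[of "{}" n "{}"]) (auto simp: bip_edges_def)

section \<open>The regime \<open>t = o(log n)\<close>\<close>

lemma contains_K_bip_if_dense_small_t:
  fixes \<delta> :: real
  assumes \<delta>: "0 < \<delta>" "\<delta> \<le> 1" and "2 \<le> n"
    and n_large: "log 2 (real n) \<le> \<delta> * real n / 16" "log 2 (real n) \<le> \<delta> / 8 * sqrt (real n)"
    and t: "real t \<le> log 2 (real n) / (2 * log 2 (16 / \<delta>))"
    and D: "D \<subseteq> edges_on n" and dense: "\<delta> * real (n choose 2) \<le> real (card D)"
  shows "contains_subgraph n (K_bip t) D"
proof (cases "t = 0")
  case False
  define L where "L = log 2 (16 / \<delta>)"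
  have "log 2 16 \<le> L"
    unfolding L_def using \<delta> by (subst log_le_cancel_iff) (auto simp: field_simps)
  then have "4 \<le> L"
    using log_pow_cancel[of 2 4] by simp
  then have tL: "2 * real t * L \<le> log 2 (real n)"
    using t unfolding L_def by (simp add: field_simps)
  moreover have "real t * 1 \<le> real t * (2 * L)"
    using \<open>4 \<le> L\<close> by (intro mult_left_mono) auto
  ultimately have "real t \<le> log 2 (real n)"
    by (simp add: algebra_simps)
  have "1 / sqrt (real n) \<le> (\<delta> / 16) ^ t"
    using \<delta> \<open>2 \<le> n\<close> tL unfolding L_def by (intro inverse_sqrt_le_power) auto
  have "real t \<le> \<delta> / 8 * sqrt (real n)"
    using \<open>real t \<le> log 2 (real n)\<close> n_large(2) by linarith
  also have "\<dots> = \<delta> * real n / 8 * (1 / sqrt (real n))"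
    using \<open>2 \<le> n\<close> by (simp add: field_simps real_div_sqrt)
  also have "\<dots> \<le> \<delta> * real n / 8 * (\<delta> / 16) ^ t"
    using \<open>1 / sqrt (real n) \<le> (\<delta> / 16) ^ t\<close> \<delta> by (intro mult_left_mono) auto
  finally have t_tiny: "real t \<le> \<delta> * real n / 8 * (\<delta> / 16) ^ t" .
  have t_small: "real t \<le> \<delta> * real n / 16"
    using \<open>real t \<le> log 2 (real n)\<close> n_large(1) by linarith
  show ?thesis
    using \<delta> False by (intro contains_K_bip_if_dense[OF _ \<open>2 \<le> n\<close> _ D dense t_small t_tiny]) auto
qed (simp add: contains_K_bip_0)

lemma eventually_dense_graphs_contain_K_bip:
  fixes \<delta> :: real
  assumes "0 < \<delta>" "\<delta> \<le> 1"
  shows "\<forall>\<^sub>F n in sequentially. \<forall>t D. real t \<le> log 2 (real n) / (2 * log 2 (16 / \<delta>)) \<longrightarrow>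
           D \<subseteq> edges_on n \<longrightarrow> \<delta> * real (n choose 2) \<le> real (card D) \<longrightarrow>
           contains_subgraph n (K_bip t) D"
proof -
  have "\<forall>\<^sub>F n in sequentially. log 2 (real n) \<le> \<delta> * real n / 16"
    using assms by real_asymp
  moreover have "\<forall>\<^sub>F n in sequentially. log 2 (real n) \<le> \<delta> / 8 * sqrt (real n)"
    using assms by real_asymp
  moreover have "\<forall>\<^sub>F n in sequentially. 2 \<le> n"
    by (rule eventually_ge_at_top)
  ultimately show ?thesis
    by eventually_elim (use assms contains_K_bip_if_dense_small_t in blast)
qed

lemma ex_sparse_exponent_lt:
  assumes "0 < r"
  shows "\<exists>\<delta>. 0 < \<delta> \<and> \<delta> \<le> 1 \<and> sparse_exponent \<delta> < r"
proof -
  have "(sparse_exponent \<longlongrightarrow> 0) (at_right 0)"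
    unfolding sparse_exponent_def by real_asymp
  then have "\<forall>\<^sub>F x in at_right 0. sparse_exponent x < r"
    using assms by (intro order_tendstoD(2)) auto
  then obtain b where "b > 0" and b: "\<And>y. 0 < y \<Longrightarrow> y < b \<Longrightarrow> sparse_exponent y < r"
    unfolding eventually_at_right_field by auto
  then show ?thesis
    by (intro exI[of _ "min (b / 2) 1"]) auto
qed

lemma M_L_K_bip_ratio_tendsto_1:
  fixes t :: "nat \<Rightarrow> nat"
  assumes t: "(\<lambda>n. real (t n)) \<in> o(\<lambda>n. log 2 (real n))"
  shows "(\<lambda>n. log 2 (real (M_L (K_bip (t n)) n)) / real (n choose 2)) \<longlonglongrightarrow> 1"
proof (rule LIMSEQ_I)
  fix r :: real assume "0 < r"
  then obtain \<delta> where \<delta>: "0 < \<delta>" "\<delta> \<le> 1" "sparse_exponent \<delta> < r / 2"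
    using ex_sparse_exponent_lt[of "r / 2"] by auto
  have "0 < 1 / (2 * log 2 (16 / \<delta>))"
    using \<delta> by (simp add: field_simps)
  from landau_o.smallD[OF t this] eventually_ge_at_top[of 1]
  have "\<forall>\<^sub>F n in sequentially. real (t n) \<le> log 2 (real n) / (2 * log 2 (16 / \<delta>))"
    by eventually_elim simp
  moreover note eventually_dense_graphs_contain_K_bip[OF \<delta>(1,2)]
  moreover have "\<forall>\<^sub>F n in sequentially. 1 / (real n * (real n - 1) / 2) < r / 2"
    using \<open>0 < r\<close> by real_asymp
  moreover have "\<forall>\<^sub>F n in sequentially. 2 \<le> n"
    by (rule eventually_ge_at_top)
  ultimately have "\<forall>\<^sub>F n in sequentially.
                     norm (log 2 (real (M_L (K_bip (t n)) n)) / real (n choose 2) - 1) < r"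
  proof eventually_elim
    case (elim n)
    have "1 - 1 / real (n choose 2) - sparse_exponent \<delta>
            \<le> log 2 (real (M_L (K_bip (t n)) n)) / real (n choose 2)"
      using elim by (intro M_L_ratio_ge_if_dense_contains[OF \<delta>(1,2)]) auto
    moreover have "log 2 (real (M_L (K_bip (t n)) n)) / real (n choose 2) \<le> 1"
      using log_M_L_le[of "K_bip (t n)" n] elim(4) by (simp add: divide_le_eq_1)
    ultimately show ?case
      using elim(3) \<delta>(3) by (simp add: real_choose_two abs_if)
  qed
  then show "\<exists>no. \<forall>n\<ge>no. norm (log 2 (real (M_L (K_bip (t n)) n)) / real (n choose 2) - 1) < r"
    unfolding eventually_sequentially .
qed

section \<open>The regime \<open>t = c log n\<close>\<close>

lemma choose_diff_le_choose_mult_power: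
  "k \<le> m \<Longrightarrow> m \<le> N \<Longrightarrow> real (N - k choose (m - k)) \<le> real (N choose m) * (real m / real N) ^ k"
proof (induction k arbitrary: m N)
  case 0
  then show ?case by simp
next
  case (Suc k)
  then obtain m' N' where m: "m = Suc m'" and N: "N = Suc N'" and "k \<le> m'" "m' \<le> N'"
    by (cases m; cases N) auto
  have "real N * real (N' choose m') = real m * real (N choose m)"
    using Suc_times_binomial[of m' N'] m N by (metis of_nat_mult)
  then have ratio: "real (N' choose m') = real (N choose m) * (real m / real N)"
    using N by (simp add: field_simps)
  have "real m' / real N' \<le> real m / real N"
    using m N \<open>m' \<le> N'\<close> by (cases "N' = 0") (auto simp: field_simps)
  have "real (N - Suc k choose (m - Suc k)) = real (N' - k choose (m' - k))"
    using m N by simp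
  also have "\<dots> \<le> real (N' choose m') * (real m' / real N') ^ k"
    using Suc.IH[OF \<open>k \<le> m'\<close> \<open>m' \<le> N'\<close>] .
  also have "\<dots> \<le> real (N' choose m') * (real m / real N) ^ k"
    using \<open>real m' / real N' \<le> real m / real N\<close> by (intro mult_left_mono power_mono) auto
  also have "\<dots> = real (N choose m) * (real m / real N) ^ Suc k"
    unfolding ratio by simp
  finally show ?case .
qed

lemma card_supersets_le:
  assumes "finite E" "Q \<subseteq> E" "card Q = k" "m \<le> card E"
  shows "real (card {H. H \<subseteq> E \<and> card H = m \<and> Q \<subseteq> H})
           \<le> real (card E choose m) * (real m / real (card E)) ^ k"
proof (cases "k \<le> m")
  case True
  have "finite Q" using assms(1,2) finite_subset by blast
  have "{H. H \<subseteq> E \<and> card H = m \<and> Q \<subseteq> H} \<subseteq> (\<lambda>B. B \<union> Q) ` {B. B \<subseteq> E - Q \<and> card B = m - k}"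
  proof
    fix H assume "H \<in> {H. H \<subseteq> E \<and> card H = m \<and> Q \<subseteq> H}"
    then have H: "H \<subseteq> E" "card H = m" "Q \<subseteq> H" by auto
    then have "H = (H - Q) \<union> Q" by auto
    moreover have "H - Q \<in> {B. B \<subseteq> E - Q \<and> card B = m - k}"
      using H card_Diff_subset[OF \<open>finite Q\<close> H(3)] assms(3) by auto
    ultimately show "H \<in> (\<lambda>B. B \<union> Q) ` {B. B \<subseteq> E - Q \<and> card B = m - k}"
      by (rule image_eqI)
  qed
  moreover have fin: "finite {B. B \<subseteq> E - Q \<and> card B = m - k}"
  proof (rule finite_subset)
    show "{B. B \<subseteq> E - Q \<and> card B = m - k} \<subseteq> Pow (E - Q)" by blast
  qed (use assms(1) in simp)
  ultimately have "card {H. H \<subseteq> E \<and> card H = m \<and> Q \<subseteq> H}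
                     \<le> card ((\<lambda>B. B \<union> Q) ` {B. B \<subseteq> E - Q \<and> card B = m - k})"
    by (intro card_mono) auto
  also have "\<dots> \<le> card {B. B \<subseteq> E - Q \<and> card B = m - k}"
    using fin by (rule card_image_le)
  also have "\<dots> = card E - k choose (m - k)"
    using assms(1-3) \<open>finite Q\<close> by (simp add: n_subsets card_Diff_subset)
  finally show ?thesis
    using choose_diff_le_choose_mult_power[OF True assms(4)] by linarith
next
  case False
  then have no_supersets: "{H. H \<subseteq> E \<and> card H = m \<and> Q \<subseteq> H} = {}"
    using assms(1,3) by (auto dest: card_mono[OF finite_subset])
  show ?thesis unfolding no_supersets by simp
qed

lemma card_supersets_bip_edges_le:
  assumes "S \<subseteq> {1..n}" "T \<subseteq> {1..n}" "card S = t" "card T = t" "S \<inter> T = {}"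
    and "m \<le> n choose 2"
  shows "real (card {H. H \<subseteq> edges_on n \<and> card H = m \<and> bip_edges S T \<subseteq> H})
           \<le> real ((n choose 2) choose m) * (real m / real (n choose 2)) ^ (t ^ 2)"
  using card_supersets_le[OF finite_edges_on bip_edges_subset_edges_on[OF assms(1,2,5)], of "t ^ 2" m]
    assms by (simp add: card_edges_on card_bip_edges power2_eq_square)

lemma card_graphs_containing_K_bip_le:
  assumes "m \<le> n choose 2"
  shows "real (card {H. H \<subseteq> edges_on n \<and> card H = m \<and> contains_subgraph n (K_bip t) H})
           \<le> real (n choose t) ^ 2 * (real ((n choose 2) choose m) * (real m / real (n choose 2)) ^ (t ^ 2))"
proof -
  define N where "N = n choose 2"
  define Ts where "Ts = {T. T \<subseteq> {1..n} \<and> card T = t}"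
  define P where "P = {p \<in> Ts \<times> Ts. fst p \<inter> snd p = {}}"
  define C where "C p = {H. H \<subseteq> edges_on n \<and> card H = m \<and> bip_edges (fst p) (snd p) \<subseteq> H}" for p
  have "finite Ts" unfolding Ts_def by (rule finite_subset[of _ "Pow {1..n}"]) auto
  then have "finite P" unfolding P_def by simp
  have "card P \<le> card (Ts \<times> Ts)"
    unfolding P_def using \<open>finite Ts\<close> by (intro card_mono) auto
  then have "card P \<le> (n choose t) ^ 2"
    unfolding Ts_def by (simp add: card_cartesian_product n_subsets power2_eq_square)
  then have card_P: "real (card P) \<le> real (n choose t) ^ 2"
    by (metis of_nat_le_iff of_nat_power)
  have card_C: "real (card (C p)) \<le> real (N choose m) * (real m / real N) ^ (t ^ 2)" if "p \<in> P" for p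
    using that card_supersets_bip_edges_le[OF _ _ _ _ _ assms, of "fst p" "snd p" t]
    unfolding P_def Ts_def C_def N_def by auto
  have "{H. H \<subseteq> edges_on n \<and> card H = m \<and> contains_subgraph n (K_bip t) H} \<subseteq> (\<Union>p\<in>P. C p)"
  proof
    fix H assume H: "H \<in> {H. H \<subseteq> edges_on n \<and> card H = m \<and> contains_subgraph n (K_bip t) H}"
    then obtain S T where "S \<subseteq> {1..n}" "T \<subseteq> {1..n}" "card S = t" "card T = t" "S \<inter> T = {}"
        "bip_edges S T \<subseteq> H"
      unfolding contains_K_bip_iff by blast
    then have "(S, T) \<in> P" "H \<in> C (S, T)"
      using H unfolding P_def Ts_def C_def by auto
    then show "H \<in> (\<Union>p\<in>P. C p)" by blast
  qed
  then have "real (card {H. H \<subseteq> edges_on n \<and> card H = m \<and> contains_subgraph n (K_bip t) H})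
               \<le> real (card (\<Union>p\<in>P. C p))"
    using \<open>finite P\<close> by (simp add: C_def card_mono)
  also have "\<dots> \<le> (\<Sum>p\<in>P. real (card (C p)))"
    using card_UN_le[OF \<open>finite P\<close>, of C] by (simp flip: of_nat_sum)
  also have "\<dots> \<le> real (card P) * (real (N choose m) * (real m / real N) ^ (t ^ 2))"
    using sum_mono[of P _ "\<lambda>_. real (N choose m) * (real m / real N) ^ (t ^ 2)"] card_C by simp
  also have "\<dots> \<le> real (n choose t) ^ 2 * (real (N choose m) * (real m / real N) ^ (t ^ 2))"
    using card_P by (intro mult_right_mono) auto
  finally show ?thesis unfolding N_def .
qed

lemma ex_K_bip_free_graph:
  assumes "m \<le> n choose 2"
    and first_moment: "real (n choose t) ^ 2 * (real m / real (n choose 2)) ^ (t ^ 2) < 1"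
  shows "\<exists>H. H \<subseteq> edges_on n \<and> card H = m \<and> \<not> contains_subgraph n (K_bip t) H"
proof -
  define A where "A = {H. H \<subseteq> edges_on n \<and> card H = m}"
  have "card A = (n choose 2) choose m"
    unfolding A_def by (simp add: n_subsets card_edges_on)
  have "real (card {H \<in> A. contains_subgraph n (K_bip t) H})
          \<le> real (n choose t) ^ 2 * (real ((n choose 2) choose m) * (real m / real (n choose 2)) ^ (t ^ 2))"
    using card_graphs_containing_K_bip_le[OF assms(1)] unfolding A_def by (simp add: conj_assoc)
  also have "\<dots> = real (card A) * (real (n choose t) ^ 2 * (real m / real (n choose 2)) ^ (t ^ 2))"
    unfolding \<open>card A = (n choose 2) choose m\<close> by (simp only: mult.left_commute)
  also have "\<dots> < real (card A)"
    using first_moment assms(1) \<open>card A = (n choose 2) choose m\<close> by simp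
  finally have "{H \<in> A. contains_subgraph n (K_bip t) H} \<noteq> A"
    by auto
  then show ?thesis unfolding A_def by blast
qed

lemma choose_sq_mult_power_lt_1:
  fixes q :: real
  assumes "0 < q" "0 < n" "0 < T" and "2 * log 2 (real n) + real T * log 2 q < 0"
  shows "real (n choose T) ^ 2 * q ^ (T ^ 2) < 1"
proof -
  have "0 < real n" using assms(2) by simp
  have "real (n choose T) ^ 2 * q ^ (T ^ 2) \<le> (real n ^ T) ^ 2 * q ^ (T ^ 2)"
  proof -
    have "real (n choose T) \<le> real n ^ T"
      using binomial_fact_pow[of n T] fact_ge_1[of T]
      by (metis le_trans mult_le_mono2 mult_1_right of_nat_le_iff of_nat_power)
    then show ?thesis using assms(1) by (intro mult_right_mono power_mono) auto
  qed
  also have "\<dots> = real n ^ (T * 2) * q ^ (T ^ 2)"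
    by (simp only: power_mult)
  also have "\<dots> = 2 powr (real T * (2 * log 2 (real n) + real T * log 2 q))"
    unfolding power_eq_2_powr_log[OF assms(1)] power_eq_2_powr_log[OF \<open>0 < real n\<close>] by (simp add: powr_add[symmetric] algebra_simps power2_eq_square)
  also have "\<dots> < 2 powr 0"
    using assms(3,4) by (intro powr_less_mono) (auto simp: mult_pos_neg)
  finally show ?thesis by simp
qed

lemma eventually_first_moment_lt_1:
  fixes c q :: real and t :: "nat \<Rightarrow> nat"
  assumes c: "c > 0" and t: "\<forall>n. t n = nat \<lfloor>c * log 2 (real n)\<rfloor>"
    and q: "0 < q" "q < 2 powr (- 2 / c)"
  shows "\<forall>\<^sub>F n in sequentially. real (n choose t n) ^ 2 * q ^ (t n ^ 2) < 1"
proof -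
  \<comment> \<open>\<open>\<gamma>\<close> is the slack in \<open>q < 2 powr (- 2 / c)\<close>; it absorbs the rounding in \<open>t n\<close>.\<close>
  define \<gamma> where "\<gamma> = - log 2 q - 2 / c"
  have "log 2 q < log 2 (2 powr (- 2 / c))"
    using q by (subst log_less_cancel_iff) auto
  then have "0 < \<gamma>" unfolding \<gamma>_def by simp
  have "\<forall>\<^sub>F n in sequentially. 2 / c < (c * log 2 (real n) - 1) * \<gamma>"
    using c \<open>0 < \<gamma>\<close> by real_asymp
  moreover have "\<forall>\<^sub>F n in sequentially. 2 \<le> c * log 2 (real n)"
    using c by real_asymp
  moreover have "\<forall>\<^sub>F n in sequentially. 1 \<le> n"
    by (rule eventually_ge_at_top)
  ultimately show ?thesis
  proof eventually_elim
    case (elim n)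
    define x where "x = c * log 2 (real n)"
    have "real (t n) = of_int \<lfloor>x\<rfloor>"
      using t elim(2) unfolding x_def by simp
    then have "x - 1 \<le> real (t n)" "0 < t n"
      using real_of_int_floor_gt_diff_one[of x] elim(2) unfolding x_def by linarith+
    have "(x - 1) * (2 / c + \<gamma>) \<le> real (t n) * (2 / c + \<gamma>)"
      using \<open>x - 1 \<le> real (t n)\<close> c \<open>0 < \<gamma>\<close> by (intro mult_right_mono) auto
    moreover have "(x - 1) * (2 / c + \<gamma>) = 2 * log 2 (real n) - 2 / c + (x - 1) * \<gamma>"
      unfolding x_def using c by (simp add: field_simps)
    ultimately have "2 * log 2 (real n) + real (t n) * log 2 q < 0"
      using elim(1) unfolding x_def \<gamma>_def by (simp add: algebra_simps)
    then show ?case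
      using q(1) elim(3) \<open>0 < t n\<close> by (intro choose_sq_mult_power_lt_1) auto
  qed
qed

lemma M_L_K_bip_ratio_le:
  fixes q :: real
  assumes q: "0 < q" "q \<le> 1" and "2 \<le> n"
    and first_moment: "real (n choose T) ^ 2 * q ^ (T ^ 2) < 1"
  shows "log 2 (real (M_L (K_bip T) n)) / real (n choose 2) \<le> 1 - q + 1 / real (n choose 2)"
proof -
  define N where "N = n choose 2"
  define m where "m = nat \<lfloor>q * real N\<rfloor>"
  have "0 < real N" using \<open>2 \<le> n\<close> by (simp add: N_def)
  have "real m = of_int \<lfloor>q * real N\<rfloor>"
    using q \<open>0 < real N\<close> unfolding m_def by simp
  then have "real m \<le> q * real N" "q * real N - 1 \<le> real m"
    using of_int_floor_le[of "q * real N"] real_of_int_floor_gt_diff_one[of "q * real N"]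
    by linarith+
  then have "m \<le> N"
    using mult_right_mono[OF q(2), of "real N"] by linarith
  have "(real m / real N) ^ (T ^ 2) \<le> q ^ (T ^ 2)"
    using \<open>real m \<le> q * real N\<close> \<open>0 < real N\<close> by (intro power_mono) (auto simp: divide_simps)
  then have "real (n choose T) ^ 2 * (real m / real N) ^ (T ^ 2) \<le> real (n choose T) ^ 2 * q ^ (T ^ 2)"
    by (intro mult_left_mono) auto
  then have "real (n choose T) ^ 2 * (real m / real N) ^ (T ^ 2) < 1"
    using first_moment by linarith
  then obtain H where H: "H \<subseteq> edges_on n" "card H = m" "\<not> contains_subgraph n (K_bip T) H"
    using ex_K_bip_free_graph[of m n T] \<open>m \<le> N\<close> unfolding N_def by blast
  have "M_L (K_bip T) n \<le> 2 ^ card (edges_on n - H)"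
    using H by (intro M_L_le_if_free)
  also have "card (edges_on n - H) = N - m"
    using H card_Diff_subset[of H "edges_on n"] finite_subset[OF H(1)]
    by (simp add: card_edges_on N_def)
  finally have "log 2 (real (M_L (K_bip T) n)) \<le> real (N - m)"
    using M_L_pos by (rule log_le_if_le_power_2[rotated])
  also have "\<dots> \<le> real N - q * real N + 1"
    using \<open>m \<le> N\<close> \<open>q * real N - 1 \<le> real m\<close> by simp
  finally show ?thesis
    using \<open>0 < real N\<close> unfolding N_def[symmetric] by (simp add: field_simps)
qed

lemma limsup_M_L_K_bip_ratio_le:
  fixes t :: "nat \<Rightarrow> nat" and c :: real
  assumes c: "c > 0" and t: "\<forall>n. t n = nat \<lfloor>c * log 2 (real n)\<rfloor>"
  shows "limsup (\<lambda>n. ereal (log 2 (real (M_L (K_bip (t n)) n)) / real (n choose 2)))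
           \<le> ereal (1 - 2 powr (- 2 / c))"
proof (rule ereal_le_epsilon2)
  fix e :: real assume "0 < e"
  define p where "p = 2 powr (- 2 / c)"
  define q where "q = max (p / 2) (p - e / 2)"
  have "0 < p" "p < 1"
    unfolding p_def using c powr_less_mono[of "- 2 / c" 0 2] by simp_all
  then have q: "0 < q" "q < p" "q \<le> 1" "1 - q \<le> 1 - p + e / 2"
    unfolding q_def using \<open>0 < e\<close> by auto
  have "\<forall>\<^sub>F n in sequentially. 1 / (real n * (real n - 1) / 2) < e / 2"
    using \<open>0 < e\<close> by real_asymp
  with eventually_first_moment_lt_1[OF c t q(1) q(2)[unfolded p_def]] eventually_ge_at_top[of 2]
  have "\<forall>\<^sub>F n in sequentially.
          ereal (log 2 (real (M_L (K_bip (t n)) n)) / real (n choose 2)) \<le> ereal (1 - p + e)"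
  proof eventually_elim
    case (elim n)
    then show ?case
      using M_L_K_bip_ratio_le[OF q(1,3) elim(2,1)] q(4) by (simp add: real_choose_two)
  qed
  then have "limsup (\<lambda>n. ereal (log 2 (real (M_L (K_bip (t n)) n)) / real (n choose 2)))
               \<le> ereal (1 - p + e)"
    by (rule Limsup_bounded)
  then show "limsup (\<lambda>n. ereal (log 2 (real (M_L (K_bip (t n)) n)) / real (n choose 2)))
               \<le> ereal (1 - 2 powr (- 2 / c)) + ereal e"
    unfolding p_def by simp
qed

theorem theorem1p5:
  fixes t :: "nat \<Rightarrow> nat"
  shows "((\<lambda>n. real (t n)) \<in> o(\<lambda>n. log 2 (real n)) \<longrightarrow>
           (\<lambda>n. log 2 (real (M_L (K_bip (t n)) n)) / real (n choose 2)) \<longlonglongrightarrow> 1)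
       \<and> (\<forall>c::real. c > 0 \<longrightarrow> (\<forall>n. t n = nat \<lfloor>c * log 2 (real n)\<rfloor>) \<longrightarrow>
           limsup (\<lambda>n. ereal (log 2 (real (M_L (K_bip (t n)) n)) / real (n choose 2)))
             \<le> ereal (1 - 2 powr (- 2 / c)))"
  using M_L_K_bip_ratio_tendsto_1[of t] limsup_M_L_K_bip_ratio_le[of _ t] by blast

end
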